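(* Let $n\ge0$ and $w,u\in S_n$. Assume that the compositions $\beta=(\beta_1,\dots,\beta_p):=\operatorname{cLRM}'(w)$ and $\gamma=(\gamma_1,\dots,\gamma_p):=\operatorname{cLRM}'(u)$ are anagrams of one another, and let $\chi\in S_p$ satisfy $\beta_{\chi(i)}=\gamma_i$ for each $i\in[p]$. Let $v\in S_n$ be a permutation that sends each $\operatorname{Set}(\gamma)_i$ to $\operatorname{Set}(\beta)_{\chi(i)}$ and has V-shape on each $\operatorname{Set}(\gamma)_i$ (equivalently, the word $\underline{v(1)}\,\underline{v(2)}\cdots\underline{v(n)}$ appears in the expansion of the product $V^{\operatorname{Set}(\beta)_{\chi(1)}}\cdots V^{\operatorname{Set}(\beta)_{\chi(p)}}$ in the free algebra). Assume that $vu=w$. Then $\chi=\mathrm{id}$, $v=\mathrm{id}$ and $\gamma=\beta$.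
   Context: $S_n$ is the symmetric group on $[n]$, with product $(uw)(i)=u(w(i))$. $\operatorname{LRM}(w)=\{i\in[n]: w(k)>i\text{ for all }k<w^{-1}(i)\}$ (left-to-right minima), $\operatorname{LRM}'(w)=\{\ell-1:\ell\in\operatorname{LRM}(w),\ \ell>1\}\subseteq[n-1]$, and $\operatorname{cLRM}'(w)=\operatorname{Comp}(\operatorname{LRM}'(w))$, where for $I=\{i_1<\cdots<i_{p-1}\}\subseteq[n-1]$, $\operatorname{Comp}(I)=(i_1-i_0,\dots,i_p-i_{p-1})$ with $i_0=0$, $i_p=n$. Compositions are anagrams if they have the same multiset of parts. For a composition $\alpha=(\alpha_1,\dots,\alpha_p)$ of $n$, $\alpha_{\le i}=\alpha_1+\cdots+\alpha_i$ and $\operatorname{Set}(\alpha)_i=\{\alpha_{\le i-1}+1,\dots,\alpha_{\le i}\}$. A permutation $v$ has V-shape on an interval $\{i,i+1,\dots,j\}$ if there is $m$ with $i\le m\le j$ and $v(i)>v(i+1)>\cdots>v(m)<v(m+1)<\cdots<v(j)$. In the free algebra over letters $\underline1,\dots,\underline n$, $[a,b]=ab-ba$ and for nonempty $S\subseteq[n]$ with elements $s_1<\cdots<s_k$, $V^S=[[\cdots[\underline{s_1},\underline{s_2}],\dots],\underline{s_k}]$. *)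

theory Defs
  imports "HOL-Combinatorics.Permutations"
begin

text \<open>Permutations of [n] are functions nat => nat with w permutes {1..n};
  the product (uw)(i) = u(w(i)) is function composition u o w.
  Compositions are lists of naturals, indexed from 1.\<close>

definition LRM :: "nat \<Rightarrow> (nat \<Rightarrow> nat) \<Rightarrow> nat set" where
  "LRM n w = {i \<in> {1..n}. \<forall>k \<in> {1..<inv w i}. w k > i}"

definition LRM' :: "nat \<Rightarrow> (nat \<Rightarrow> nat) \<Rightarrow> nat set" where
  "LRM' n w = {l - 1 | l. l \<in> LRM n w \<and> l > 1}"

definition Comp :: "nat \<Rightarrow> nat set \<Rightarrow> nat list" where
  "Comp n I = (let xs = sorted_list_of_set I in map2 (-) (xs @ [n]) (0 # xs))"

definition cLRM' :: "nat \<Rightarrow> (nat \<Rightarrow> nat) \<Rightarrow> nat list" where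
  "cLRM' n w = Comp n (LRM' n w)"

definition part :: "nat list \<Rightarrow> nat \<Rightarrow> nat" where
  "part \<alpha> i = \<alpha> ! (i - 1)"

definition psum :: "nat list \<Rightarrow> nat \<Rightarrow> nat" where
  "psum \<alpha> i = sum_list (take i \<alpha>)"

definition SetC :: "nat list \<Rightarrow> nat \<Rightarrow> nat set" where
  "SetC \<alpha> i = {psum \<alpha> (i - 1) + 1 .. psum \<alpha> i}"

definition vshape :: "(nat \<Rightarrow> nat) \<Rightarrow> nat \<Rightarrow> nat \<Rightarrow> bool" where
  "vshape v i j = (\<exists>m. i \<le> m \<and> m \<le> j \<and>
      (\<forall>k. i \<le> k \<and> k < m \<longrightarrow> v k > v (k + 1)) \<and>
      (\<forall>k. m \<le> k \<and> k < j \<longrightarrow> v k < v (k + 1)))"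

end

theory Submission
  imports Defs
begin

text \<open>The left-to-right minima of a permutation x are exactly the minima of the blocks
  Set(cLRM'(x))_i, and they appear in x in decreasing order. The minimum of block i sits at
  the first position where x takes a value in block i: an earlier such value would create a
  left-to-right minimum inside the block. Since v maps block i of \<gamma> onto block \<chi>(i) of \<beta>,
  w = v u enters block \<chi>(i) exactly where u enters block i. Comparing the orders of these
  first positions makes \<chi> increasing, hence the identity; so \<gamma> = \<beta>, and v stabilises every
  block and fixes its minimum. A V-shape fixing its minimum is increasing, and an increasing
  bijection of a finite set onto itself is the identity.\<close>

lemma psum_length: "psum \<alpha> (length \<alpha>) = sum_list \<alpha>"
  by (simp add: psum_def)

lemma psum_map2_diff:
  assumes "sorted (a # ys)" and "j \<le> length ys"
  shows "a + psum (map2 (-) ys (a # ys)) j = (a # ys) ! j"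
  using assms
proof (induction ys arbitrary: a j)
  case Nil
  then show ?case by (simp add: psum_def)
next
  case (Cons b ys)
  show ?case
  proof (cases j)
    case 0
    then show ?thesis by (simp add: psum_def)
  next
    case (Suc j')
    have "a \<le> b" "sorted (b # ys)" using Cons.prems(1) by auto
    then show ?thesis using Cons.IH[of b j'] Cons.prems(2) Suc by (simp add: psum_def)
  qed
qed

lemma psum_Comp:
  assumes "finite I" and "I \<subseteq> {..n}" and "j \<le> card I + 1"
  shows "psum (Comp n I) j = (0 # sorted_list_of_set I @ [n]) ! j"
proof -
  let ?xs = "sorted_list_of_set I"
  have "sorted (0 # ?xs @ [n])" using assms(1,2) by (auto simp: sorted_append)
  moreover have "Comp n I = map2 (-) (?xs @ [n]) (0 # ?xs @ [n])"
    by (simp add: Comp_def Let_def zip_append2 flip: append_Cons)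
  ultimately show ?thesis using psum_map2_diff[of 0 "?xs @ [n]" j] assms(3) by simp
qed

lemma length_Comp: "length (Comp n I) = card I + 1"
  by (simp add: Comp_def Let_def)

lemma sum_list_Comp:
  assumes "finite I" and "I \<subseteq> {..n}"
  shows "sum_list (Comp n I) = n"
  using psum_Comp[OF assms order_refl] psum_length[of "Comp n I"]
  by (simp add: length_Comp nth_append)

lemma psum_Comp_image:
  assumes fin: "finite I" and sub: "I \<subseteq> {..n}"
  defines "\<alpha> \<equiv> Comp n I"
  shows "psum \<alpha> ` {1..<length \<alpha>} = I"
proof -
  let ?xs = "sorted_list_of_set I"
  have "psum \<alpha> j = ?xs ! (j - 1)" if "j \<in> {1..<length \<alpha>}" for j
    using psum_Comp[OF fin sub, of j] that by (auto simp: \<alpha>_def length_Comp nth_append nth_Cons')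
  then have "psum \<alpha> ` {1..<length \<alpha>} = (\<lambda>j. ?xs ! (j - 1)) ` {1..<length \<alpha>}"
    by (intro image_cong) auto
  also have "\<dots> = (!) ?xs ` {0..<length ?xs}"
    by (force simp: \<alpha>_def length_Comp image_iff)
  also have "\<dots> = I" using fin by (simp add: nth_image)
  finally show ?thesis .
qed

lemma Comp_psum_strict_mono:
  assumes "finite I" and "I \<subseteq> {1..<n}" and "0 < n"
  shows "strict_mono_on {..length (Comp n I)} (psum (Comp n I))"
proof (rule strict_mono_onI)
  fix i j assume ij: "i \<in> {..length (Comp n I)}" "j \<in> {..length (Comp n I)}" "i < j"
  let ?Z = "0 # sorted_list_of_set I @ [n]"
  have "sorted_wrt (<) ?Z" using assms by (auto simp: sorted_wrt_append)
  from sorted_wrt_nth_less[OF this, of i j] have "?Z ! i < ?Z ! j" using ij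
    by (simp add: length_Comp)
  moreover have "I \<subseteq> {..n}" using assms(2) by auto
  ultimately show "psum (Comp n I) i < psum (Comp n I) j"
    using psum_Comp[OF assms(1)] ij by (simp add: length_Comp)
qed

lemma one_in_LRM:
  assumes x: "x permutes {1..n}" and "0 < n"
  shows "1 \<in> LRM n x"
proof -
  have "1 < x k" if "k \<in> {1..<inv x 1}" for k
  proof -
    have "inv x 1 \<in> {1..n}" using permutes_in_image[OF permutes_inv[OF x]] \<open>0 < n\<close> by simp
    then have "x k \<in> {1..n}" using that permutes_in_image[OF x] by auto
    moreover have "x k \<noteq> 1"
    proof
      assume "x k = 1"
      then have "inv x 1 = k" using permutes_inverses(2)[OF x] by metis
      then show False using that by simp
    qed
    ultimately show ?thesis by auto
  qed
  then show ?thesis using \<open>0 < n\<close> by (auto simp: LRM_def)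
qed

lemma LRM_eq_insert_Suc_LRM':
  assumes "x permutes {1..n}" and "0 < n"
  shows "LRM n x = insert 1 (Suc ` LRM' n x)"
proof
  show "LRM n x \<subseteq> insert 1 (Suc ` LRM' n x)"
  proof
    fix l assume l: "l \<in> LRM n x"
    then have "1 \<le> l" by (simp add: LRM_def)
    show "l \<in> insert 1 (Suc ` LRM' n x)"
    proof (cases "l = 1")
      case False
      then have "l - 1 \<in> LRM' n x" using l \<open>1 \<le> l\<close> by (auto simp: LRM'_def)
      then have "Suc (l - 1) \<in> Suc ` LRM' n x" by (rule imageI)
      then show ?thesis using \<open>1 \<le> l\<close> by simp
    qed simp
  qed
  show "insert 1 (Suc ` LRM' n x) \<subseteq> LRM n x"
    using one_in_LRM[OF assms] by (auto simp: LRM'_def)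
qed

lemma LRM_positions_antimono:
  assumes x: "x permutes {1..n}" and a: "a \<in> LRM n x" and b: "b \<in> LRM n x" and "a < b"
  shows "inv x b < inv x a"
proof (rule ccontr)
  assume "\<not> inv x b < inv x a"
  moreover have "inv x a \<noteq> inv x b"
    using \<open>a < b\<close> permutes_inverses(1)[OF x, of a] permutes_inverses(1)[OF x, of b] by auto
  moreover have "1 \<le> inv x a"
    using a permutes_in_image[OF permutes_inv[OF x]] by (auto simp: LRM_def)
  ultimately have "b < x (inv x a)" using b by (auto simp: LRM_def)
  then show False using \<open>a < b\<close> permutes_inverses(1)[OF x] by simp
qed

lemma LRM_between:
  assumes x: "x permutes {1..n}" and a: "a \<in> LRM n x" and k: "1 \<le> k" "k < inv x a"
  shows "\<exists>c\<in>LRM n x. a < c \<and> c \<le> x k"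
proof -
  define c where "c = Min (x ` {1..k})"
  have "c \<in> x ` {1..k}" using k by (simp add: c_def)
  then obtain k' where k': "k' \<in> {1..k}" "x k' = c" by auto
  have "inv x a \<le> n" using a permutes_in_image[OF permutes_inv[OF x]] by (auto simp: LRM_def)
  then have "c \<in> {1..n}" using k k' permutes_in_image[OF x, of k'] by auto
  moreover have "inv x c = k'" using permutes_inverses(2)[OF x] by (simp flip: k'(2))
  moreover have "c < x j" if "j \<in> {1..<k'}" for j
  proof -
    have "c \<le> x j" using that k' by (simp add: c_def)
    moreover have "x j \<noteq> c"
    proof
      assume "x j = c"
      then have "j = k'" using k'(2) injD[OF permutes_inj[OF x]] by simp
      then show False using that by simp
    qed
    ultimately show ?thesis by simp
  qed
  ultimately have "c \<in> LRM n x" by (auto simp: LRM_def)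
  moreover have "a < c" using a k k' by (auto simp: LRM_def)
  moreover have "c \<le> x k" using k by (simp add: c_def)
  ultimately show ?thesis by blast
qed

lemma cLRM'_psum:
  assumes x: "x permutes {1..n}" and "0 < n" and \<alpha>: "\<alpha> = cLRM' n x"
  shows "strict_mono_on {..length \<alpha>} (psum \<alpha>)"
    and "sum_list \<alpha> = n"
    and "LRM n x = (\<lambda>j. psum \<alpha> j + 1) ` {..<length \<alpha>}"
proof -
  have sub: "LRM' n x \<subseteq> {1..<n}" by (auto simp: LRM'_def LRM_def)
  have fin: "finite (LRM' n x)" using finite_subset[OF sub] by simp
  have \<alpha>': "\<alpha> = Comp n (LRM' n x)" using \<alpha> by (simp add: cLRM'_def)
  show "strict_mono_on {..length \<alpha>} (psum \<alpha>)"
    using Comp_psum_strict_mono[OF fin sub \<open>0 < n\<close>] \<alpha>' by simp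
  have sub_n: "LRM' n x \<subseteq> {..n}" using sub by auto
  show "sum_list \<alpha> = n" using sum_list_Comp[OF fin sub_n] \<alpha>' by simp
  have "{..<length \<alpha>} = insert 0 {1..<length \<alpha>}" using \<alpha>' length_Comp by auto
  then have "(\<lambda>j. psum \<alpha> j + 1) ` {..<length \<alpha>} = insert 1 (Suc ` psum \<alpha> ` {1..<length \<alpha>})"
    by (auto simp: psum_def)
  also have "\<dots> = LRM n x"
    using LRM_eq_insert_Suc_LRM'[OF x \<open>0 < n\<close>] psum_Comp_image[OF fin sub_n] \<alpha>' by simp
  finally show "LRM n x = (\<lambda>j. psum \<alpha> j + 1) ` {..<length \<alpha>}" ..
qed

lemma SetC_cover:
  assumes "y \<in> {1..sum_list \<alpha>}"
  shows "\<exists>i\<in>{1..length \<alpha>}. y \<in> SetC \<alpha> i"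
proof -
  define i where "i = (LEAST j. y \<le> psum \<alpha> j)"
  have "y \<le> psum \<alpha> (length \<alpha>)" using assms by (simp add: psum_length)
  then have "y \<le> psum \<alpha> i" "i \<le> length \<alpha>" unfolding i_def by (auto intro: LeastI Least_le)
  moreover have "i \<noteq> 0"
  proof
    assume "i = 0"
    then show False using \<open>y \<le> psum \<alpha> i\<close> assms by (simp add: psum_def)
  qed
  moreover have "\<not> y \<le> psum \<alpha> (i - 1)"
    using not_less_Least[of "i - 1" "\<lambda>j. y \<le> psum \<alpha> j"] \<open>i \<noteq> 0\<close> unfolding i_def by simp
  ultimately show ?thesis by (intro bexI[of _ i]) (auto simp: SetC_def)
qed

lemma part_eq_imp_eq:
  assumes "length \<alpha> = length \<beta>" and "\<forall>i\<in>{1..length \<beta>}. part \<alpha> i = part \<beta> i"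
  shows "\<alpha> = \<beta>"
proof (rule nth_equalityI)
  fix k assume "k < length \<alpha>"
  then show "\<alpha> ! k = \<beta> ! k" using assms(1) assms(2)[rule_format, of "Suc k"] by (simp add: part_def)
qed (rule assms(1))

lemma cLRM'_first_entry:
  assumes x: "x permutes {1..n}" and "0 < n" and \<alpha>: "\<alpha> = cLRM' n x"
    and i: "i \<in> {1..length \<alpha>}"
  shows "(LEAST k. x k \<in> SetC \<alpha> i) = inv x (psum \<alpha> (i - 1) + 1)"
proof -
  let ?a = "psum \<alpha> (i - 1) + 1"
  note mono = cLRM'_psum(1)[OF x \<open>0 < n\<close> \<alpha>]
  have a_LRM: "?a \<in> LRM n x" using cLRM'_psum(3)[OF x \<open>0 < n\<close> \<alpha>] i by force
  have "psum \<alpha> (i - 1) < psum \<alpha> i" using strict_mono_onD[OF mono] i by auto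
  then have "x (inv x ?a) \<in> SetC \<alpha> i" using permutes_inverses(1)[OF x] by (simp add: SetC_def)
  moreover have "inv x ?a \<le> k" if k: "x k \<in> SetC \<alpha> i" for k
  proof (rule ccontr)
    assume "\<not> inv x ?a \<le> k"
    have "psum \<alpha> i \<le> n"
      using strict_mono_on_leD[OF mono, of i "length \<alpha>"] i cLRM'_psum(2)[OF x \<open>0 < n\<close> \<alpha>]
      by (simp add: psum_length)
    then have "SetC \<alpha> i \<subseteq> {1..n}" by (auto simp: SetC_def)
    then have "1 \<le> k" using k permutes_not_in[OF x, of 0] by (cases "k = 0") auto
    then obtain c where c: "c \<in> LRM n x" "?a < c" "c \<le> x k"
      using LRM_between[OF x a_LRM] \<open>\<not> inv x ?a \<le> k\<close> by force
    then obtain j where j: "j < length \<alpha>" "c = psum \<alpha> j + 1"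
      using cLRM'_psum(3)[OF x \<open>0 < n\<close> \<alpha>] by auto
    have "psum \<alpha> (i - 1) < psum \<alpha> j" "psum \<alpha> j < psum \<alpha> i"
      using c j k by (auto simp: SetC_def)
    moreover have "i - 1 \<in> {..length \<alpha>}" "i \<in> {..length \<alpha>}" "j \<in> {..length \<alpha>}"
      using i j by auto
    ultimately have "\<not> j \<le> i - 1" "\<not> i \<le> j"
      using strict_mono_on_leD[OF mono] by (meson not_le)+
    then show False by arith
  qed
  ultimately show ?thesis by (rule Least_equality)
qed

lemma cLRM'_block_start_positions_antimono:
  assumes x: "x permutes {1..n}" and "0 < n" and \<alpha>: "\<alpha> = cLRM' n x"
  shows "strict_antimono_on {1..length \<alpha>} (\<lambda>i. inv x (psum \<alpha> (i - 1) + 1))"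
proof (rule monotone_onI)
  fix i j assume ij: "i \<in> {1..length \<alpha>}" "j \<in> {1..length \<alpha>}" "i < j"
  then have "psum \<alpha> (i - 1) < psum \<alpha> (j - 1)"
    using strict_mono_onD[OF cLRM'_psum(1)[OF x \<open>0 < n\<close> \<alpha>]] by auto
  moreover have "psum \<alpha> (i - 1) + 1 \<in> LRM n x" "psum \<alpha> (j - 1) + 1 \<in> LRM n x"
    using cLRM'_psum(3)[OF x \<open>0 < n\<close> \<alpha>] ij by force+
  ultimately show "inv x (psum \<alpha> (j - 1) + 1) < inv x (psum \<alpha> (i - 1) + 1)"
    using LRM_positions_antimono[OF x] by simp
qed

lemma strict_mono_on_image_self_fixes:
  fixes f :: "'a::linorder \<Rightarrow> 'a"
  assumes A: "finite A" and mono: "strict_mono_on A f" and img: "f ` A = A" and x: "x \<in> A"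
  shows "f x = x"
proof -
  let ?below = "\<lambda>z. {y \<in> A. y < z}"
  have "f ` ?below x = ?below (f x)"
  proof
    show "f ` ?below x \<subseteq> ?below (f x)" using img x strict_mono_onD[OF mono] by auto
    show "?below (f x) \<subseteq> f ` ?below x"
    proof
      fix z assume z: "z \<in> ?below (f x)"
      then obtain y where y: "y \<in> A" "z = f y" using img by auto
      have "y < x"
      proof (rule ccontr)
        assume "\<not> y < x"
        then have "f x \<le> f y" using strict_mono_on_leD[OF mono x y(1)] by simp
        then show False using z y(2) leD by blast
      qed
      then show "z \<in> f ` ?below x" using y by auto
    qed
  qed
  moreover have "inj_on f (?below x)"
    using strict_mono_on_imp_inj_on[OF mono] by (rule inj_on_subset) auto
  ultimately have card_eq: "card (?below (f x)) = card (?below x)" by (simp flip: card_image)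
  have fin: "finite (?below z)" for z using A by simp
  have "f x \<in> A" using img x by blast
  show ?thesis
  proof (rule linorder_cases[of "f x" x])
    assume "f x < x"
    then have "?below (f x) \<subset> ?below x" using \<open>f x \<in> A\<close> by auto
    then have "card (?below (f x)) < card (?below x)" by (rule psubset_card_mono[OF fin])
    then show ?thesis using card_eq by simp
  next
    assume "x < f x"
    then have "?below x \<subset> ?below (f x)" using x by auto
    then have "card (?below x) < card (?below (f x))" by (rule psubset_card_mono[OF fin])
    then show ?thesis using card_eq by simp
  qed
qed

lemma permutes_strict_mono_on_eq_id:
  fixes \<chi> :: "'a::linorder \<Rightarrow> 'a"
  assumes "\<chi> permutes A" and "finite A" and "strict_mono_on A \<chi>"
  shows "\<chi> = id"
proof
  fix x
  show "\<chi> x = id x"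
    using strict_mono_on_image_self_fixes[OF assms(2,3) permutes_image[OF assms(1)]]
      permutes_not_in[OF assms(1)] by (cases "x \<in> A") auto
qed

lemma strict_mono_on_if_strict_antimono_comp:
  fixes \<chi> :: "'a::linorder \<Rightarrow> 'b::linorder" and s :: "'b \<Rightarrow> 'c::linorder"
  assumes s: "strict_antimono_on B s" and \<chi>: "\<chi> ` A \<subseteq> B"
    and t: "strict_antimono_on A t" and st: "\<forall>i\<in>A. s (\<chi> i) = t i"
  shows "strict_mono_on A \<chi>"
proof (rule strict_mono_onI)
  fix i j assume ij: "i \<in> A" "j \<in> A" "i < j"
  then have t_ij: "s (\<chi> j) < s (\<chi> i)" using monotone_onD[OF t] st by simp
  show "\<chi> i < \<chi> j"
  proof (rule ccontr)
    assume "\<not> \<chi> i < \<chi> j"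
    then consider "\<chi> i = \<chi> j" | "\<chi> j < \<chi> i" using not_less_iff_gr_or_eq by blast
    then show False
    proof cases
      case 1
      then show False using t_ij by simp
    next
      case 2
      then have "s (\<chi> i) < s (\<chi> j)" using monotone_onD[OF s] \<chi> ij by auto
      then show False using t_ij less_asym by blast
    qed
  qed
qed

lemma vshape_fixes_interval:
  assumes vs: "vshape v a b" and img: "v ` {a..b} = {a..b}" and va: "v a = a"
    and y: "y \<in> {a..b}"
  shows "v y = y"
proof -
  obtain m where m: "a \<le> m" "m \<le> b" "\<forall>k. a \<le> k \<and> k < m \<longrightarrow> v (k + 1) < v k"
    "\<forall>k. m \<le> k \<and> k < b \<longrightarrow> v k < v (k + 1)"
    using vs unfolding vshape_def by blast
  have "m = a"
  proof (rule ccontr)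
    assume "m \<noteq> a"
    then have "v (a + 1) < a" using m va by auto
    moreover have "v (a + 1) \<in> {a..b}" using img m \<open>m \<noteq> a\<close> by auto
    ultimately show False by simp
  qed
  have "strict_mono_on {a..b} v"
  proof (rule strict_mono_onI)
    fix r s assume rs: "r \<in> {a..b}" "s \<in> {a..b}" "r < s"
    have "v k < v (Suc k)" if "k \<in> {a..<b}" for k using m(4) \<open>m = a\<close> that by simp
    from lift_Suc_mono_less_ivl[where N = "{a..<b}" and f = v, OF this \<open>r < s\<close>]
    show "v r < v s" using rs by auto
  qed
  then show ?thesis using strict_mono_on_image_self_fixes[OF finite_atLeastAtMost _ img y] by simp
qed

lemma permutes_eq_id_if_vshape_on_blocks:
  assumes v: "v permutes {1..sum_list \<alpha>}"
    and blocks: "\<forall>i\<in>{1..length \<alpha>}. v ` SetC \<alpha> i = SetC \<alpha> i"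
    and starts: "\<forall>i\<in>{1..length \<alpha>}. v (psum \<alpha> (i - 1) + 1) = psum \<alpha> (i - 1) + 1"
    and vshape: "\<forall>i\<in>{1..length \<alpha>}. vshape v (psum \<alpha> (i - 1) + 1) (psum \<alpha> i)"
  shows "v = id"
proof
  fix y
  show "v y = id y"
  proof (cases "y \<in> {1..sum_list \<alpha>}")
    case True
    then obtain i where i: "i \<in> {1..length \<alpha>}" and y: "y \<in> SetC \<alpha> i" using SetC_cover by blast
    show ?thesis
      using vshape_fixes_interval[OF vshape[rule_format, OF i] _ starts[rule_format, OF i]]
        blocks[rule_format, OF i] y by (simp add: SetC_def)
  qed (simp add: permutes_not_in[OF v])
qed

lemma cLRM'_first_entries_eq:
  assumes w: "w permutes {1..n}" and u: "u permutes {1..n}" and "inj v" and "0 < n"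
    and \<beta>: "\<beta> = cLRM' n w" and \<gamma>: "\<gamma> = cLRM' n u" and prod: "v \<circ> u = w"
    and i: "i \<in> {1..length \<gamma>}" and c: "c \<in> {1..length \<beta>}"
    and block: "v ` SetC \<gamma> i = SetC \<beta> c"
  shows "inv w (psum \<beta> (c - 1) + 1) = inv u (psum \<gamma> (i - 1) + 1)"
proof -
  have "w k \<in> SetC \<beta> c \<longleftrightarrow> u k \<in> SetC \<gamma> i" for k
    by (simp add: inj_image_mem_iff[OF \<open>inj v\<close>] flip: prod block)
  then show ?thesis
    using cLRM'_first_entry[OF w \<open>0 < n\<close> \<beta> c] cLRM'_first_entry[OF u \<open>0 < n\<close> \<gamma> i] by simp
qed

lemma cLRM'_block_start_matching_eq_id:
  assumes w: "w permutes {1..n}" and u: "u permutes {1..n}" and "0 < n"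
    and \<beta>: "\<beta> = cLRM' n w" and \<gamma>: "\<gamma> = cLRM' n u" and "length \<gamma> = length \<beta>"
    and \<chi>: "\<chi> permutes {1..length \<beta>}"
    and match: "\<forall>i\<in>{1..length \<beta>}. inv w (psum \<beta> (\<chi> i - 1) + 1) = inv u (psum \<gamma> (i - 1) + 1)"
  shows "\<chi> = id"
proof -
  have "\<chi> ` {1..length \<beta>} \<subseteq> {1..length \<beta>}" using permutes_image[OF \<chi>] by simp
  moreover have "strict_antimono_on {1..length \<beta>} (\<lambda>i. inv u (psum \<gamma> (i - 1) + 1))"
    using cLRM'_block_start_positions_antimono[OF u \<open>0 < n\<close> \<gamma>] \<open>length \<gamma> = length \<beta>\<close> by simp
  ultimately have "strict_mono_on {1..length \<beta>} \<chi>"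
    using strict_mono_on_if_strict_antimono_comp[OF
        cLRM'_block_start_positions_antimono[OF w \<open>0 < n\<close> \<beta>] _ _ match] by blast
  then show ?thesis using permutes_strict_mono_on_eq_id[OF \<chi>] by simp
qed

theorem lemma5p2:
  fixes n :: nat and w u v \<chi> :: "nat \<Rightarrow> nat" and \<beta> \<gamma> :: "nat list"
  assumes w: "w permutes {1..n}" and u: "u permutes {1..n}" and v: "v permutes {1..n}"
    and \<beta>: "\<beta> = cLRM' n w" and \<gamma>: "\<gamma> = cLRM' n u"
    and anagram: "mset \<beta> = mset \<gamma>"
    and \<chi>: "\<chi> permutes {1..length \<beta>}"
    and \<chi>_part: "\<forall>i \<in> {1..length \<beta>}. part \<beta> (\<chi> i) = part \<gamma> i"
    and v_blocks: "\<forall>i \<in> {1..length \<beta>}. v ` SetC \<gamma> i = SetC \<beta> (\<chi> i)"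
    and v_vshape: "\<forall>i \<in> {1..length \<beta>}. vshape v (psum \<gamma> (i - 1) + 1) (psum \<gamma> i)"
    and prod: "v \<circ> u = w"
  shows "\<chi> = id \<and> v = id \<and> \<gamma> = \<beta>"
proof (cases "n = 0")
  case True
  then have "\<beta> = [0]" "\<gamma> = [0]" using \<beta> \<gamma> by (simp_all add: cLRM'_def Comp_def LRM'_def LRM_def)
  then show ?thesis using \<chi> v True by simp
next
  case False
  then have "0 < n" by simp
  define p where "p = length \<beta>"
  have len_\<gamma>: "length \<gamma> = p" using anagram p_def by (metis size_mset)
  have first_entries: "\<forall>i\<in>{1..p}. inv w (psum \<beta> (\<chi> i - 1) + 1) = inv u (psum \<gamma> (i - 1) + 1)"
    using cLRM'_first_entries_eq[OF w u permutes_inj[OF v] \<open>0 < n\<close> \<beta> \<gamma> prod] v_blocks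
      permutes_in_image[OF \<chi>] len_\<gamma> p_def by auto
  then have \<chi>_id: "\<chi> = id"
    using cLRM'_block_start_matching_eq_id[OF w u \<open>0 < n\<close> \<beta> \<gamma> _ \<chi>] len_\<gamma> p_def by simp
  have \<gamma>_\<beta>: "\<gamma> = \<beta>" using part_eq_imp_eq[of \<gamma> \<beta>] \<chi>_part len_\<gamma> p_def by (simp add: \<chi>_id)
  have "v a = a" if "a \<in> (\<lambda>i. psum \<gamma> (i - 1) + 1) ` {1..p}" for a
  proof -
    have "inv w a = inv u a" using first_entries that by (auto simp: \<chi>_id \<gamma>_\<beta>)
    then have "v (u (inv u a)) = w (inv w a)" by (simp flip: prod)
    then show ?thesis using permutes_inverses(1)[OF u] permutes_inverses(1)[OF w] by simp
  qed
  then have "v = id"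
    using permutes_eq_id_if_vshape_on_blocks[of v \<gamma>] v cLRM'_psum(2)[OF u \<open>0 < n\<close> \<gamma>]
      v_blocks v_vshape len_\<gamma> p_def by (simp add: \<chi>_id \<gamma>_\<beta>)
  then show ?thesis using \<chi>_id \<gamma>_\<beta> by simp
qed

end
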